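(* For every integer $k\geq 2$ and every bipartite graph $G$ containing at most one cycle, $\nu_{k}(G) \geq \frac{\nu_{k-1}(G) + \nu_{k+1}(G)}{2}$.
   Context: Graphs are finite, without loops, possibly with multiple edges. For $k\geq 1$, $\nu_k(G)$ is the maximum number of edges of a $k$-edge-colorable subgraph of $G$. *)

theory Defs
  imports Complex_Main
begin

text \<open>A finite multigraph without loops: vertex set V, edge set E (edges are
  abstract objects, so parallel edges are allowed), and ends e is the
  2-element set of endpoints of edge e.\<close>

definition multigraph :: "'a set \<Rightarrow> 'e set \<Rightarrow> ('e \<Rightarrow> 'a set) \<Rightarrow> bool" where
  "multigraph V E ends \<longleftrightarrow> finite V \<and> finite E \<and>
     (\<forall>e\<in>E. ends e \<subseteq> V \<and> card (ends e) = 2)"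

definition bipartite :: "'a set \<Rightarrow> 'e set \<Rightarrow> ('e \<Rightarrow> 'a set) \<Rightarrow> bool" where
  "bipartite V E ends \<longleftrightarrow> (\<exists>A. A \<subseteq> V \<and> (\<forall>e\<in>E. card (ends e \<inter> A) = 1))"

text \<open>An edge set C forms a cycle: nonempty, every vertex has degree 0 or 2
  in C, and C is connected (no proper nonempty subset of C closed under
  adjacency of edges).\<close>

definition is_cycle :: "('e \<Rightarrow> 'a set) \<Rightarrow> 'e set \<Rightarrow> bool" where
  "is_cycle ends C \<longleftrightarrow> finite C \<and> C \<noteq> {} \<and>
     (\<forall>v. card {e\<in>C. v \<in> ends e} = 0 \<or> card {e\<in>C. v \<in> ends e} = 2) \<and>
     (\<forall>D. D \<subseteq> C \<and> D \<noteq> {} \<and>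
          (\<forall>e\<in>D. \<forall>f\<in>C. ends e \<inter> ends f \<noteq> {} \<longrightarrow> f \<in> D) \<longrightarrow> D = C)"

definition at_most_one_cycle :: "'e set \<Rightarrow> ('e \<Rightarrow> 'a set) \<Rightarrow> bool" where
  "at_most_one_cycle E ends \<longleftrightarrow>
     (\<forall>C1 C2. C1 \<subseteq> E \<and> is_cycle ends C1 \<and> C2 \<subseteq> E \<and> is_cycle ends C2 \<longrightarrow> C1 = C2)"

definition edge_colorable :: "('e \<Rightarrow> 'a set) \<Rightarrow> nat \<Rightarrow> 'e set \<Rightarrow> bool" where
  "edge_colorable ends k F \<longleftrightarrow> (\<exists>c :: 'e \<Rightarrow> nat.
     (\<forall>e\<in>F. c e < k) \<and>
     (\<forall>e\<in>F. \<forall>f\<in>F. e \<noteq> f \<and> ends e \<inter> ends f \<noteq> {} \<longrightarrow> c e \<noteq> c f))"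

definition nu :: "nat \<Rightarrow> 'e set \<Rightarrow> ('e \<Rightarrow> 'a set) \<Rightarrow> nat" where
  "nu k E ends = Max {card F | F. F \<subseteq> E \<and> edge_colorable ends k F}"

end

theory Submission
  imports Defs
begin

(* Let F1 and F2 be maximum (k-1)- and (k+1)-edge-colourable edge sets and I = F1 \<inter> F2.
   The remaining edges of F1 \<union> F2 form a bipartite multigraph, which splits into two parts
   R and B whose degrees differ by at most one at every vertex.  Since the degrees of F1 and F2
   add up to at most 2k everywhere, I \<union> R and I \<union> B have maximum degree at most k, so both
   are k-edge-colourable by Koenig's edge colouring theorem; together they have
   card F1 + card F2 edges. *)

definition degree :: "('e \<Rightarrow> 'a set) \<Rightarrow> 'e set \<Rightarrow> 'a \<Rightarrow> nat" where
  "degree ends S v = card {f\<in>S. v \<in> ends f}"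

lemma degree_empty [simp]: "degree ends {} v = 0"
  by (simp add: degree_def)

lemma degree_insert:
  assumes "finite S" "e \<notin> S"
  shows "degree ends (insert e S) v = degree ends S v + (if v \<in> ends e then 1 else 0)"
proof -
  have "{f\<in>insert e S. v \<in> ends f} =
      (if v \<in> ends e then insert e {f\<in>S. v \<in> ends f} else {f\<in>S. v \<in> ends f})"
    by auto
  then show ?thesis
    using assms by (simp add: degree_def)
qed

lemma degree_Un_Int:
  assumes "finite S" "finite T"
  shows "degree ends S v + degree ends T v =
    degree ends (S \<union> T) v + degree ends (S \<inter> T) v"
proof -
  have "{f\<in>S \<union> T. v \<in> ends f} = {f\<in>S. v \<in> ends f} \<union> {f\<in>T. v \<in> ends f}"
    and "{f\<in>S \<inter> T. v \<in> ends f} = {f\<in>S. v \<in> ends f} \<inter> {f\<in>T. v \<in> ends f}"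
    by auto
  then show ?thesis
    unfolding degree_def
    using assms card_Un_Int[of "{f\<in>S. v \<in> ends f}" "{f\<in>T. v \<in> ends f}"] by simp
qed

lemma degree_Un_disjoint:
  assumes "finite S" "finite T" "S \<inter> T = {}"
  shows "degree ends (S \<union> T) v = degree ends S v + degree ends T v"
  using degree_Un_Int[OF assms(1,2), of ends v] assms(3) by simp

lemma degree_ge_2_if_adjacent:
  assumes "finite S" "e \<in> S" "f \<in> S" "e \<noteq> f" "v \<in> ends e" "v \<in> ends f"
  shows "2 \<le> degree ends S v"
proof -
  have "{e, f} \<subseteq> {g\<in>S. v \<in> ends g}"
    using assms by auto
  then have "card {e, f} \<le> degree ends S v"
    unfolding degree_def using assms(1) by (intro card_mono) auto
  then show ?thesis
    using assms(4) by simp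
qed

definition bipartite_edges :: "('e \<Rightarrow> 'a set) \<Rightarrow> 'a set \<Rightarrow> 'e set \<Rightarrow> bool" where
  "bipartite_edges ends A S \<longleftrightarrow> (\<forall>e\<in>S. \<exists>u w. ends e = {u, w} \<and> u \<in> A \<and> w \<notin> A)"

lemma bipartite_edgesE:
  assumes "bipartite_edges ends A S" "e \<in> S"
  obtains u w where "ends e = {u, w}" "u \<in> A" "w \<notin> A"
  using assms unfolding bipartite_edges_def by blast

lemma bipartite_edges_subset:
  "bipartite_edges ends A S \<Longrightarrow> T \<subseteq> S \<Longrightarrow> bipartite_edges ends A T"
  unfolding bipartite_edges_def by blast

lemma bipartite_edges_Compl:
  assumes "bipartite_edges ends A S"
  shows "bipartite_edges ends (- A) S"
  unfolding bipartite_edges_def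
proof
  fix e
  assume "e \<in> S"
  then obtain u w where "ends e = {u, w}" "u \<in> A" "w \<notin> A"
    by (rule bipartite_edgesE[OF assms])
  then show "\<exists>u w. ends e = {u, w} \<and> u \<in> - A \<and> w \<notin> - A"
    by (intro exI[of _ w] exI[of _ u]) auto
qed

lemma bipartite_edges_if_bipartite:
  assumes "multigraph V E ends" "bipartite V E ends"
  obtains A where "bipartite_edges ends A E"
proof -
  obtain A where A: "\<forall>e\<in>E. card (ends e \<inter> A) = 1"
    using assms(2) unfolding bipartite_def by blast
  have "\<exists>u w. ends e = {u, w} \<and> u \<in> A \<and> w \<notin> A" if "e \<in> E" for e
  proof -
    have "card (ends e \<inter> A) = 1"
      using A that by blast
    then obtain u where u: "ends e \<inter> A = {u}"
      by (rule card_1_singletonE)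
    have "card (ends e) = 2"
      using assms(1) that unfolding multigraph_def by blast
    moreover have "u \<in> ends e"
      using u by blast
    ultimately have "card (ends e - {u}) = 1"
      by (simp add: card_Diff_singleton)
    then obtain w where w: "ends e - {u} = {w}"
      by (rule card_1_singletonE)
    have "ends e = {u, w}" "w \<notin> A"
      using u w by blast+
    with u show ?thesis
      by blast
  qed
  then show ?thesis
    using that unfolding bipartite_edges_def by blast
qed

lemma sum_degree_side_eq_card:
  assumes "finite W" "finite S" "bipartite_edges ends A S" "\<forall>f\<in>S. ends f \<subseteq> W"
  shows "(\<Sum>v\<in>W \<inter> A. degree ends S v) = card S"
  using assms(2-)
proof (induction S rule: finite_induct)
  case empty
  then show ?case
    by simp
next
  case (insert f S)
  obtain u w where f: "ends f = {u, w}" "u \<in> A" "w \<notin> A"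
    using insert.prems(1) by (auto elim: bipartite_edgesE)
  have "W \<inter> A \<inter> ends f = {u}"
    using f insert.prems(2) by auto
  then have "(\<Sum>v\<in>W \<inter> A. if v \<in> ends f then 1 else 0) = (1::nat)"
    using assms(1) by (simp add: sum.If_cases)
  moreover have "bipartite_edges ends A S"
    using insert.prems(1) by (rule bipartite_edges_subset) auto
  ultimately show ?case
    using insert by (simp add: degree_insert sum.distrib)
qed

section \<open>Balanced splits of bipartite edge sets\<close>

definition balanced :: "('e \<Rightarrow> 'a set) \<Rightarrow> 'e set \<Rightarrow> 'e set \<Rightarrow> bool" where
  "balanced ends R B \<longleftrightarrow>
     (\<forall>v. degree ends R v \<le> degree ends B v + 1 \<and> degree ends B v \<le> degree ends R v + 1)"

lemma balanced_commute: "balanced ends R B \<longleftrightarrow> balanced ends B R"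
  unfolding balanced_def by blast

lemma balanced_degree_le:
  assumes "balanced ends R B" "degree ends R v + degree ends B v \<le> 2 * m"
  shows "degree ends R v \<le> m" "degree ends B v \<le> m"
proof -
  have "degree ends R v \<le> degree ends B v + 1" "degree ends B v \<le> degree ends R v + 1"
    using assms(1) unfolding balanced_def by blast+
  with assms(2) show "degree ends R v \<le> m" "degree ends B v \<le> m"
    by linarith+
qed

lemma balanced_even_degree_eq:
  assumes "balanced ends R B" "even (degree ends R v + degree ends B v)"
  shows "degree ends R v = degree ends B v"
proof -
  have parity: "a = b" if "even (a + b)" "a \<le> b + 1" "b \<le> a + 1" for a b :: nat
    using that by presburger
  show ?thesis
    by (rule parity[OF assms(2)]) (use assms(1) in \<open>auto simp: balanced_def\<close>)
qed

lemma balanced_insert: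
  assumes "finite R" "e \<notin> R" "balanced ends R B"
    and "\<forall>x\<in>ends e. degree ends R x \<le> degree ends B x"
  shows "balanced ends (insert e R) B"
  unfolding balanced_def
proof
  fix v
  have "degree ends R v \<le> degree ends B v + 1" "degree ends B v \<le> degree ends R v + 1"
    using assms(3) unfolding balanced_def by blast+
  then show "degree ends (insert e R) v \<le> degree ends B v + 1 \<and>
      degree ends B v \<le> degree ends (insert e R) v + 1"
    using assms(1,2,4) by (auto simp: degree_insert)
qed

lemma balanced_Un:
  assumes "finite I" "finite R" "finite B" "I \<inter> R = {}" "I \<inter> B = {}" "balanced ends R B"
  shows "balanced ends (I \<union> R) (I \<union> B)"
  using assms unfolding balanced_def by (simp add: degree_Un_disjoint)

(* Summed over either side of the bipartition, the surplus of R over B is card R - card B,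
   since every edge has exactly one end on each side. *)
lemma degree_diff_eq_at_ends:
  assumes "finite R" "finite B" "bipartite_edges ends A (R \<union> B)" "u \<in> A" "w \<notin> A"
    and "\<And>v. v \<noteq> u \<Longrightarrow> v \<noteq> w \<Longrightarrow> degree ends R v = degree ends B v"
  shows "int (degree ends R u) - int (degree ends B u) =
    int (degree ends R w) - int (degree ends B w)"
proof -
  define s where "s v = int (degree ends R v) - int (degree ends B v)" for v
  define W where "W = insert u (insert w (\<Union>(ends ` (R \<union> B))))"
  have "finite (ends f)" if "f \<in> R \<union> B" for f
    by (rule bipartite_edgesE[OF assms(3) that]) simp
  then have "finite W"
    using assms(1,2) by (simp add: W_def)
  have ends_W: "\<forall>f\<in>R. ends f \<subseteq> W" "\<forall>f\<in>B. ends f \<subseteq> W"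
    by (auto simp: W_def)
  have sum_side: "(\<Sum>v\<in>W \<inter> P. s v) = int (card R) - int (card B)"
    if "bipartite_edges ends P (R \<union> B)" for P
  proof -
    have "bipartite_edges ends P R" "bipartite_edges ends P B"
      using bipartite_edges_subset[OF that] by blast+
    then have "(\<Sum>v\<in>W \<inter> P. degree ends R v) = card R"
      and "(\<Sum>v\<in>W \<inter> P. degree ends B v) = card B"
      using sum_degree_side_eq_card[OF \<open>finite W\<close> assms(1) _ ends_W(1)]
        sum_degree_side_eq_card[OF \<open>finite W\<close> assms(2) _ ends_W(2)] by simp_all
    then show ?thesis
      by (simp add: s_def sum_subtractf flip: of_nat_sum)
  qed
  have s_zero: "s v = 0" if "v \<noteq> u" "v \<noteq> w" for v
    using assms(6)[OF that] by (simp add: s_def)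
  have "(\<Sum>v\<in>W \<inter> A. s v) = (\<Sum>v\<in>{u}. s v)"
  proof (rule sum.mono_neutral_right)
    show "\<forall>v\<in>W \<inter> A - {u}. s v = 0"
      using assms(5) s_zero by blast
  qed (use \<open>finite W\<close> assms(4) in \<open>auto simp: W_def\<close>)
  moreover have "(\<Sum>v\<in>W \<inter> - A. s v) = (\<Sum>v\<in>{w}. s v)"
  proof (rule sum.mono_neutral_right)
    show "\<forall>v\<in>W \<inter> - A - {w}. s v = 0"
      using assms(4) by (auto intro!: s_zero)
  qed (use \<open>finite W\<close> assms(5) in \<open>auto simp: W_def\<close>)
  ultimately have "s u = s w"
    using sum_side[OF assms(3)] sum_side[OF bipartite_edges_Compl[OF assms(3)]] by simp
  then show ?thesis
    by (simp add: s_def)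
qed

lemma edge_at_odd_vertex_exists:
  assumes "finite H" "H \<noteq> {}"
  shows "\<exists>e\<in>H. (\<exists>v. odd (degree ends H v)) \<longrightarrow> (\<exists>v\<in>ends e. odd (degree ends H v))"
proof (cases "\<exists>v. odd (degree ends H v)")
  case True
  then obtain v where v: "odd (degree ends H v)"
    by blast
  then have "{f\<in>H. v \<in> ends f} \<noteq> {}"
    using odd_card_imp_not_empty unfolding degree_def by blast
  with v show ?thesis
    by blast
next
  case False
  with assms(2) show ?thesis
    by blast
qed

lemma balanced_ends_comparable:
  assumes "finite R" "finite B" "bipartite_edges ends A (R \<union> B)" "balanced ends R B"
    and "ends e = {u, w}" "u \<in> A" "w \<notin> A"
    and "(\<exists>v\<in>ends e. even (degree ends R v + degree ends B v)) \<or>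
      (\<forall>v. v \<notin> ends e \<longrightarrow> even (degree ends R v + degree ends B v))"
  shows "(\<forall>x\<in>ends e. degree ends R x \<le> degree ends B x) \<or>
    (\<forall>x\<in>ends e. degree ends B x \<le> degree ends R x)"
  using assms(8)
proof
  assume "\<exists>v\<in>ends e. even (degree ends R v + degree ends B v)"
  then obtain v where "v \<in> ends e" "degree ends R v = degree ends B v"
    using balanced_even_degree_eq[OF assms(4)] by blast
  then show ?thesis
    using assms(5) by auto
next
  assume "\<forall>v. v \<notin> ends e \<longrightarrow> even (degree ends R v + degree ends B v)"
  then have "degree ends R v = degree ends B v" if "v \<noteq> u" "v \<noteq> w" for v
    using balanced_even_degree_eq[OF assms(4)] that assms(5) by simp
  then have "int (degree ends R u) - int (degree ends B u) =
      int (degree ends R w) - int (degree ends B w)"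
    by (rule degree_diff_eq_at_ends[OF assms(1-3,6,7)])
  then show ?thesis
    using assms(5) by auto
qed

lemma balanced_extend:
  assumes "finite R" "finite B" "R \<inter> B = {}" "e \<notin> R \<union> B" "balanced ends R B"
    and "bipartite_edges ends A (insert e (R \<union> B))"
    and "(\<exists>v. odd (degree ends (insert e (R \<union> B)) v)) \<longrightarrow>
      (\<exists>v\<in>ends e. odd (degree ends (insert e (R \<union> B)) v))"
  shows "balanced ends (insert e R) B \<or> balanced ends R (insert e B)"
proof -
  let ?H = "insert e (R \<union> B)"
  obtain u w where uw: "ends e = {u, w}" "u \<in> A" "w \<notin> A"
    by (rule bipartite_edgesE[OF assms(6) insertI1])
  have degree_H: "degree ends ?H v =
      degree ends R v + degree ends B v + (if v \<in> ends e then 1 else 0)" for v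
    using assms(1-4) by (simp add: degree_insert degree_Un_disjoint)
  have parity: "(\<exists>v\<in>ends e. even (degree ends R v + degree ends B v)) \<or>
      (\<forall>v. v \<notin> ends e \<longrightarrow> even (degree ends R v + degree ends B v))"
  proof (cases "\<exists>v. odd (degree ends ?H v)")
    case True
    then obtain v where "v \<in> ends e" "odd (degree ends ?H v)"
      using assms(7) by blast
    then show ?thesis
      using degree_H[of v] by auto
  next
    case False
    then show ?thesis
      using degree_H by auto
  qed
  have "bipartite_edges ends A (R \<union> B)"
    by (rule bipartite_edges_subset[OF assms(6)]) auto
  then have "(\<forall>x\<in>ends e. degree ends R x \<le> degree ends B x) \<or>
      (\<forall>x\<in>ends e. degree ends B x \<le> degree ends R x)"
    by (rule balanced_ends_comparable[OF assms(1,2) _ assms(5) uw parity])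
  moreover have "e \<notin> R" "e \<notin> B"
    using assms(4) by simp_all
  ultimately show ?thesis
    using balanced_insert[OF assms(1) \<open>e \<notin> R\<close> assms(5)]
      balanced_insert[OF assms(2) \<open>e \<notin> B\<close> balanced_commute[THEN iffD1, OF assms(5)]]
      balanced_commute[of ends "insert e B" R] by blast
qed

(* Remove an edge e chosen at a vertex of odd degree (if there is one), split the rest by
   induction and add e to the side that is not in excess at either end of e. *)
lemma balanced_split_exists:
  assumes "finite H" "bipartite_edges ends A H"
  obtains R B where "R \<union> B = H" "R \<inter> B = {}" "balanced ends R B"
proof -
  have "\<exists>R B. R \<union> B = H \<and> R \<inter> B = {} \<and> balanced ends R B"
    using assms
  proof (induction H rule: finite_remove_induct)
    case empty
    show ?case
      by (simp add: balanced_def)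
  next
    case (remove H)
    obtain e where "e \<in> H"
      and odd_at_e: "(\<exists>v. odd (degree ends H v)) \<longrightarrow> (\<exists>v\<in>ends e. odd (degree ends H v))"
      using edge_at_odd_vertex_exists[OF remove.hyps(1,2), of ends] by blast
    obtain R B where RB: "R \<union> B = H - {e}" "R \<inter> B = {}" "balanced ends R B"
      using remove.IH[OF \<open>e \<in> H\<close> bipartite_edges_subset[OF remove.prems Diff_subset]] by blast
    have "finite (R \<union> B)"
      using RB(1) remove.hyps(1) by simp
    then have fin: "finite R" "finite B"
      by simp_all
    have "e \<notin> R \<union> B" and H_eq: "H = insert e (R \<union> B)"
      using RB(1) \<open>e \<in> H\<close> by auto
    then have "balanced ends (insert e R) B \<or> balanced ends R (insert e B)"
      using balanced_extend[OF fin RB(2) _ RB(3)] remove.prems odd_at_e by simp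
    moreover have "insert e R \<union> B = H" "R \<union> insert e B = H"
      and "insert e R \<inter> B = {}" "R \<inter> insert e B = {}"
      using H_eq RB(2) \<open>e \<notin> R \<union> B\<close> by auto
    ultimately show ?case
      by blast
  qed
  then show ?thesis
    using that by blast
qed

lemma balanced_redistribution:
  assumes "finite F1" "finite F2" "bipartite_edges ends A (F1 \<union> F2)"
  obtains X Y where "X \<union> Y = F1 \<union> F2" "X \<inter> Y = F1 \<inter> F2" "balanced ends X Y"
proof -
  define I where "I = F1 \<inter> F2"
  define H where "H = (F1 \<union> F2) - I"
  have "finite H" "finite I" "H \<subseteq> F1 \<union> F2"
    using assms(1,2) by (auto simp: H_def I_def)
  then obtain R B where RB: "R \<union> B = H" "R \<inter> B = {}" "balanced ends R B"
    using balanced_split_exists[OF \<open>finite H\<close> bipartite_edges_subset[OF assms(3)]] by blast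
  have "finite R" "finite B"
    using RB(1) \<open>finite H\<close> by auto
  moreover have "I \<inter> R = {}" "I \<inter> B = {}"
    using RB(1) by (auto simp: H_def)
  ultimately have "balanced ends (I \<union> R) (I \<union> B)"
    using balanced_Un[OF \<open>finite I\<close>] RB(3) by blast
  moreover have "(I \<union> R) \<union> (I \<union> B) = F1 \<union> F2" "(I \<union> R) \<inter> (I \<union> B) = F1 \<inter> F2"
    using RB(1,2) by (auto simp: H_def I_def)
  ultimately show ?thesis
    using that by blast
qed

section \<open>Koenig's edge colouring theorem\<close>

definition proper_edge_coloring :: "('e \<Rightarrow> 'a set) \<Rightarrow> 'e set \<Rightarrow> ('e \<Rightarrow> nat) \<Rightarrow> bool" where
  "proper_edge_coloring ends F c \<longleftrightarrow>
     (\<forall>e\<in>F. \<forall>f\<in>F. e \<noteq> f \<and> ends e \<inter> ends f \<noteq> {} \<longrightarrow> c e \<noteq> c f)"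

lemma edge_colorable_iff_proper:
  "edge_colorable ends k F \<longleftrightarrow> (\<exists>c. (\<forall>e\<in>F. c e < k) \<and> proper_edge_coloring ends F c)"
  unfolding edge_colorable_def proper_edge_coloring_def ..

lemma proper_edge_coloring_subset:
  "proper_edge_coloring ends F c \<Longrightarrow> G \<subseteq> F \<Longrightarrow> proper_edge_coloring ends G c"
  unfolding proper_edge_coloring_def by blast

lemma missing_color_exists:
  assumes "finite F" "degree ends F v < k"
  shows "\<exists>a<k. \<forall>f\<in>F. v \<in> ends f \<longrightarrow> c f \<noteq> a"
proof -
  let ?used = "c ` {f\<in>F. v \<in> ends f}"
  have "finite ?used"
    using assms(1) by simp
  have "card ?used < card {..<k}"
    using card_image_le[of "{f\<in>F. v \<in> ends f}" c] assms by (simp add: degree_def)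
  then have "\<not> {..<k} \<subseteq> ?used"
    using card_mono[OF \<open>finite ?used\<close>, of "{..<k}"] by linarith
  then show ?thesis
    by blast
qed

lemma degree_le_if_edge_colorable:
  assumes "edge_colorable ends k F"
  shows "degree ends F v \<le> k"
proof -
  obtain c where c: "\<forall>e\<in>F. c e < k" "proper_edge_coloring ends F c"
    using assms unfolding edge_colorable_iff_proper by blast
  have "inj_on c {f\<in>F. v \<in> ends f}"
    using c(2) unfolding inj_on_def proper_edge_coloring_def by blast
  moreover have "c ` {f\<in>F. v \<in> ends f} \<subseteq> {..<k}"
    using c(1) by auto
  ultimately have "card {f\<in>F. v \<in> ends f} \<le> card {..<k}"
    by (intro card_inj_on_le) auto
  then show ?thesis
    by (simp add: degree_def)
qed

lemma degree_color_class_le_1: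
  assumes "finite F" "proper_edge_coloring ends F c"
  shows "degree ends {f\<in>F. c f = a} v \<le> 1"
proof -
  let ?S = "{f\<in>{f\<in>F. c f = a}. v \<in> ends f}"
  have "e = f" if "e \<in> ?S" "f \<in> ?S" for e f
  proof (rule ccontr)
    assume "e \<noteq> f"
    moreover have "ends e \<inter> ends f \<noteq> {}"
      using that by blast
    ultimately have "c e \<noteq> c f"
      using assms(2) that unfolding proper_edge_coloring_def by blast
    with that show False
      by simp
  qed
  then show ?thesis
    unfolding degree_def using assms(1) by (simp add: card_le_Suc0_iff_eq)
qed

lemma edges_disjoint_if_degree_le_1:
  assumes "finite S" "\<forall>v. degree ends S v \<le> 1" "e \<in> S" "f \<in> S" "e \<noteq> f"
  shows "ends e \<inter> ends f = {}"
proof (rule ccontr)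
  assume "ends e \<inter> ends f \<noteq> {}"
  then obtain v where "v \<in> ends e" "v \<in> ends f"
    by blast
  then have "2 \<le> degree ends S v"
    by (rule degree_ge_2_if_adjacent[OF assms(1,3-5)])
  moreover have "degree ends S v \<le> 1"
    using assms(2) by blast
  ultimately show False
    by linarith
qed

lemma proper_edge_coloring_recolor_matchings:
  assumes "finite R" "finite B" "\<forall>v. degree ends R v \<le> 1" "\<forall>v. degree ends B v \<le> 1"
    and "proper_edge_coloring ends (F - (R \<union> B)) c"
    and "\<forall>f\<in>F - (R \<union> B). c f \<noteq> a \<and> c f \<noteq> b" "a \<noteq> b"
  shows "proper_edge_coloring ends F (\<lambda>f. if f \<in> R then a else if f \<in> B then b else c f)"
    (is "proper_edge_coloring ends F ?c")
  unfolding proper_edge_coloring_def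
proof (intro ballI impI)
  fix f g
  assume fg: "f \<in> F" "g \<in> F" "f \<noteq> g \<and> ends f \<inter> ends g \<noteq> {}"
  have inside: "?c h = a \<or> ?c h = b" if "h \<in> R \<union> B" for h
    using that by auto
  have outside: "?c h = c h" "c h \<noteq> a" "c h \<noteq> b" if "h \<in> F" "h \<notin> R \<union> B" for h
    using that assms(6) by auto
  show "?c f \<noteq> ?c g"
  proof (cases "f \<in> R \<union> B \<and> g \<in> R \<union> B")
    case True
    have "\<not> (f \<in> R \<and> g \<in> R)"
      using edges_disjoint_if_degree_le_1[OF assms(1,3), of f g] fg(3) by blast
    moreover have "\<not> (f \<in> B \<and> g \<in> B)"
      using edges_disjoint_if_degree_le_1[OF assms(2,4), of f g] fg(3) by blast
    ultimately show ?thesis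
      using True assms(7) by auto
  next
    case False
    then consider "f \<notin> R \<union> B" "g \<notin> R \<union> B" | "f \<in> R \<union> B" "g \<notin> R \<union> B"
      | "f \<notin> R \<union> B" "g \<in> R \<union> B"
      by blast
    then show ?thesis
    proof cases
      case 1
      then have "c f \<noteq> c g"
        using assms(5) fg unfolding proper_edge_coloring_def by blast
      with 1 show ?thesis
        using outside fg(1,2) by simp
    next
      case 2
      then show ?thesis
        using inside[of f] outside[of g] fg(2) by auto
    next
      case 3
      then show ?thesis
        using inside[of g] outside[of f] fg(1) by auto
    qed
  qed
qed

lemma edge_colorable_recolor_matchings:
  assumes "finite R" "finite B" "\<forall>v. degree ends R v \<le> 1" "\<forall>v. degree ends B v \<le> 1"
    and "proper_edge_coloring ends (F - (R \<union> B)) c"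
    and "\<forall>f\<in>F - (R \<union> B). c f < k \<and> c f \<noteq> a \<and> c f \<noteq> b"
    and "a < k" "b < k" "a \<noteq> b"
  shows "edge_colorable ends k F"
  unfolding edge_colorable_iff_proper
proof (intro exI conjI)
  show "\<forall>f\<in>F. (if f \<in> R then a else if f \<in> B then b else c f) < k"
    using assms(6-8) by simp
  show "proper_edge_coloring ends F (\<lambda>f. if f \<in> R then a else if f \<in> B then b else c f)"
    using assms(6) by (intro proper_edge_coloring_recolor_matchings[OF assms(1-5) _ assms(9)]) simp
qed

lemma edge_colorable_insert_free_color:
  assumes "\<forall>f\<in>F. c f < k" "proper_edge_coloring ends F c"
    and "a < k" "\<forall>f\<in>F. ends f \<inter> ends e \<noteq> {} \<longrightarrow> c f \<noteq> a"
  shows "edge_colorable ends k (insert e F)"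
  unfolding edge_colorable_iff_proper
proof (intro exI conjI)
  show "\<forall>f\<in>insert e F. (c(e := a)) f < k"
    using assms(1,3) by simp
  show "proper_edge_coloring ends (insert e F) (c(e := a))"
    using assms(2,4) unfolding proper_edge_coloring_def by (auto simp: Int_commute)
qed

(* The edges coloured a or b together with e have maximum degree 2, so a balanced split of them
   consists of two matchings, which are recoloured a and b. *)
lemma edge_colorable_insert_recolor:
  assumes "finite F" "e \<notin> F" "bipartite_edges ends A (insert e F)"
    and "\<forall>f\<in>F. c f < k" "proper_edge_coloring ends F c"
    and "a < k" "b < k" "a \<noteq> b" "ends e = {u, w}"
    and "\<forall>f\<in>F. u \<in> ends f \<longrightarrow> c f \<noteq> a" "\<forall>f\<in>F. w \<in> ends f \<longrightarrow> c f \<noteq> b"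
  shows "edge_colorable ends k (insert e F)"
proof -
  define K where "K = insert e ({f\<in>F. c f = a} \<union> {f\<in>F. c f = b})"
  have "finite K"
    using assms(1) by (simp add: K_def)
  have degree_K: "degree ends K v \<le> 2" for v
  proof -
    have "{f\<in>F. c f = a} \<inter> {f\<in>F. c f = b} = {}"
      using assms(8) by blast
    then have "degree ends K v = degree ends {f\<in>F. c f = a} v + degree ends {f\<in>F. c f = b} v
        + (if v \<in> ends e then 1 else 0)"
      using assms(1,2) by (simp add: K_def degree_insert degree_Un_disjoint)
    moreover have "degree ends {f\<in>F. c f = a} u = 0" "degree ends {f\<in>F. c f = b} w = 0"
      using assms(1,10,11) by (auto simp: degree_def)
    ultimately show ?thesis
      using degree_color_class_le_1[OF assms(1,5), of a v]
        degree_color_class_le_1[OF assms(1,5), of b v] assms(9)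
      by (cases "v \<in> ends e") auto
  qed
  have "K \<subseteq> insert e F"
    by (auto simp: K_def)
  then obtain R B where RB: "R \<union> B = K" "R \<inter> B = {}" "balanced ends R B"
    using balanced_split_exists[OF \<open>finite K\<close> bipartite_edges_subset[OF assms(3)]] by blast
  have fin: "finite R" "finite B"
    using RB(1) \<open>finite K\<close> by auto
  have "degree ends R v + degree ends B v \<le> 2 * 1" for v
    using degree_K[of v] degree_Un_disjoint[OF fin RB(2), of ends v] RB(1) by simp
  then have matchings: "\<forall>v. degree ends R v \<le> 1" "\<forall>v. degree ends B v \<le> 1"
    using balanced_degree_le[OF RB(3)] by blast+
  have "insert e F - (R \<union> B) \<subseteq> F"
    using RB(1) by (auto simp: K_def)
  show ?thesis
  proof (rule edge_colorable_recolor_matchings[OF fin matchings])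
    show "proper_edge_coloring ends (insert e F - (R \<union> B)) c"
      by (rule proper_edge_coloring_subset[OF assms(5) \<open>insert e F - (R \<union> B) \<subseteq> F\<close>])
    show "\<forall>f\<in>insert e F - (R \<union> B). c f < k \<and> c f \<noteq> a \<and> c f \<noteq> b"
      using assms(4) RB(1) by (auto simp: K_def)
  qed (rule assms)+
qed

lemma edge_colorable_insert:
  assumes "finite F" "e \<notin> F" "bipartite_edges ends A (insert e F)" "edge_colorable ends k F"
    and "\<forall>v\<in>ends e. degree ends F v < k"
  shows "edge_colorable ends k (insert e F)"
proof -
  obtain c where c: "\<forall>f\<in>F. c f < k" "proper_edge_coloring ends F c"
    using assms(4) unfolding edge_colorable_iff_proper by blast
  obtain u w where uw: "ends e = {u, w}" "u \<in> A" "w \<notin> A"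
    by (rule bipartite_edgesE[OF assms(3) insertI1])
  have "degree ends F u < k" "degree ends F w < k"
    using assms(5) uw(1) by simp_all
  obtain a where a: "a < k" "\<forall>f\<in>F. u \<in> ends f \<longrightarrow> c f \<noteq> a"
    using missing_color_exists[OF assms(1) \<open>degree ends F u < k\<close>] by blast
  obtain b where b: "b < k" "\<forall>f\<in>F. w \<in> ends f \<longrightarrow> c f \<noteq> b"
    using missing_color_exists[OF assms(1) \<open>degree ends F w < k\<close>] by blast
  show ?thesis
  proof (cases "\<forall>f\<in>F. w \<in> ends f \<longrightarrow> c f \<noteq> a")
    case True
    then have "\<forall>f\<in>F. ends f \<inter> ends e \<noteq> {} \<longrightarrow> c f \<noteq> a"
      using a(2) by (auto simp: uw(1))
    then show ?thesis
      by (rule edge_colorable_insert_free_color[OF c a(1)])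
  next
    case False
    then have "a \<noteq> b"
      using b(2) by blast
    then show ?thesis
      by (rule edge_colorable_insert_recolor[OF assms(1-3) c a(1) b(1) _ uw(1) a(2) b(2)])
  qed
qed

theorem koenig_edge_coloring:
  assumes "finite F" "bipartite_edges ends A F" "\<forall>v. degree ends F v \<le> k"
  shows "edge_colorable ends k F"
  using assms
proof (induction F rule: finite_induct)
  case empty
  show ?case
    by (simp add: edge_colorable_def)
next
  case (insert e F)
  have degree_e: "degree ends (insert e F) v = degree ends F v + (if v \<in> ends e then 1 else 0)"
    for v
    using degree_insert[OF insert.hyps] .
  have "\<forall>v. degree ends F v \<le> k"
    using insert.prems(2) unfolding degree_e by (metis add_leD1)
  then have "edge_colorable ends k F"
    by (rule insert.IH[OF bipartite_edges_subset[OF insert.prems(1) subset_insertI]])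
  moreover have "\<forall>v\<in>ends e. degree ends F v < k"
    using insert.prems(2) unfolding degree_e by (metis Suc_eq_plus1 Suc_le_lessD)
  ultimately show ?case
    by (rule edge_colorable_insert[OF insert.hyps insert.prems(1)])
qed

section \<open>Maximum k-edge-colourable edge sets\<close>

lemma nu_attained:
  assumes "finite E"
  obtains F where "F \<subseteq> E" "edge_colorable ends k F" "card F = nu k E ends"
proof -
  let ?sizes = "{card F | F. F \<subseteq> E \<and> edge_colorable ends k F}"
  have "?sizes \<subseteq> card ` Pow E"
    by auto
  then have "finite ?sizes"
    using assms finite_subset by blast
  moreover have "edge_colorable ends k {}"
    by (simp add: edge_colorable_def)
  then have "?sizes \<noteq> {}"
    by blast
  ultimately have "nu k E ends \<in> ?sizes"
    unfolding nu_def by (rule Max_in)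
  then obtain F where "nu k E ends = card F" "F \<subseteq> E" "edge_colorable ends k F"
    by blast
  then show ?thesis
    using that[of F] by simp
qed

lemma card_le_nu:
  assumes "finite E" "F \<subseteq> E" "edge_colorable ends k F"
  shows "card F \<le> nu k E ends"
  unfolding nu_def using assms by (intro Max_ge) auto

lemma bipartite_nu_midpoint_concave:
  assumes "finite E" "bipartite_edges ends A E" "p + q \<le> 2 * m"
  shows "nu p E ends + nu q E ends \<le> 2 * nu m E ends"
proof -
  obtain F1 where F1: "F1 \<subseteq> E" "edge_colorable ends p F1" "card F1 = nu p E ends"
    by (rule nu_attained[OF assms(1)])
  obtain F2 where F2: "F2 \<subseteq> E" "edge_colorable ends q F2" "card F2 = nu q E ends"
    by (rule nu_attained[OF assms(1)])
  have fin: "finite F1" "finite F2"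
    using finite_subset[OF F1(1) assms(1)] finite_subset[OF F2(1) assms(1)] .
  have "F1 \<union> F2 \<subseteq> E"
    using F1(1) F2(1) by blast
  then obtain X Y where XY: "X \<union> Y = F1 \<union> F2" "X \<inter> Y = F1 \<inter> F2" "balanced ends X Y"
    using balanced_redistribution[OF fin bipartite_edges_subset[OF assms(2)]] by blast
  have "finite (X \<union> Y)"
    using XY(1) fin by simp
  then have finXY: "finite X" "finite Y"
    by simp_all
  have "X \<subseteq> E" "Y \<subseteq> E"
    using XY(1) \<open>F1 \<union> F2 \<subseteq> E\<close> by blast+
  have degree_XY: "degree ends X v + degree ends Y v \<le> 2 * m" for v
  proof -
    have "degree ends X v + degree ends Y v = degree ends F1 v + degree ends F2 v"
      using degree_Un_Int[OF finXY, of ends v] degree_Un_Int[OF fin, of ends v] XY(1,2) by simp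
    also have "\<dots> \<le> p + q"
      using degree_le_if_edge_colorable[OF F1(2)] degree_le_if_edge_colorable[OF F2(2)]
      by (rule add_mono)
    finally show ?thesis
      using assms(3) by linarith
  qed
  have "edge_colorable ends m X" "edge_colorable ends m Y"
    using koenig_edge_coloring[OF finXY(1) bipartite_edges_subset[OF assms(2) \<open>X \<subseteq> E\<close>]]
      koenig_edge_coloring[OF finXY(2) bipartite_edges_subset[OF assms(2) \<open>Y \<subseteq> E\<close>]]
      balanced_degree_le[OF XY(3) degree_XY] by blast+
  then have "card X + card Y \<le> 2 * nu m E ends"
    using card_le_nu[OF assms(1) \<open>X \<subseteq> E\<close>] card_le_nu[OF assms(1) \<open>Y \<subseteq> E\<close>] by fastforce
  moreover have "card X + card Y = card F1 + card F2"
    using card_Un_Int[OF finXY] card_Un_Int[OF fin] XY(1,2) by simp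
  ultimately show ?thesis
    using F1(3) F2(3) by simp
qed

theorem theorem14:
  fixes V :: "'a set" and E :: "'e set" and ends :: "'e \<Rightarrow> 'a set" and k :: nat
  assumes "multigraph V E ends"
    and "bipartite V E ends"
    and "at_most_one_cycle E ends"
    and "k \<ge> 2"
  shows "real (nu k E ends) \<ge> (real (nu (k - 1) E ends) + real (nu (k + 1) E ends)) / 2"
proof -
  obtain A where "bipartite_edges ends A E"
    using bipartite_edges_if_bipartite[OF assms(1,2)] by blast
  moreover have "finite E"
    using assms(1) by (simp add: multigraph_def)
  moreover have "(k - 1) + (k + 1) \<le> 2 * k"
    using assms(4) by simp
  ultimately have "nu (k - 1) E ends + nu (k + 1) E ends \<le> 2 * nu k E ends"
    using bipartite_nu_midpoint_concave by blast
  then have "real (nu (k - 1) E ends + nu (k + 1) E ends) \<le> real (2 * nu k E ends)"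
    by (rule of_nat_mono)
  then show ?thesis
    by simp
qed

end
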